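(* For $n>0$ and $J\subseteq S$, there is a bijection $\mathfrak{S}_n^J(231)\simeq\mathrm{NC}_n^J$.
   Context: $\mathfrak{S}_n$ is the symmetric group on $[n]=\{1,\dots,n\}$, $s_i=(i,i+1)$, $S=\{s_1,\dots,s_{n-1}\}$, one-line notation $w=w_1\cdots w_n$. For $J\subseteq S$, $\mathfrak{S}_n^J$ is the set of $w$ with $w_i<w_{i+1}$ whenever $s_i\in J$. Writing $J=S\setminus\{s_{j_1},\dots,s_{j_r}\}$ with $j_1<\dots<j_r$, the $J$-regions are $\{1,\dots,j_1\},\{j_1+1,\dots,j_2\},\dots,\{j_r+1,\dots,n\}$. $\mathfrak{S}_n^J(231)$ is the set of $w\in\mathfrak{S}_n^J$ admitting no indices $i<j<k$ in pairwise different $J$-regions with $w_k<w_i<w_j$ and $w_i=w_k+1$. For a set partition $\mathbf P$ of $[n]$, a bump is a pair $(a,b)$, $a<b$, with $a,b$ in the same part and no element of that part strictly between them. $\mathbf P$ is $J$-noncrossing if: (NC1) no two distinct elements of the same $J$-region lie in the same part; (NC2) whenever two distinct bumps $(i_1,i_2),(j_1,j_2)$ satisfy $i_1<j_1<i_2<j_2$, either $i_1,j_1$ lie in the same $J$-region or $i_2,j_1$ lie in the same $J$-region; (NC3) whenever two distinct bumps satisfy $i_1<j_1<j_2<i_2$, then $i_1$ and $j_1$ lie in different $J$-regions. $\mathrm{NC}_n^J$ denotes the set of $J$-noncrossing partitions of $[n]$. *)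

theory Defs
  imports "HOL-Combinatorics.Permutations" "HOL-Library.Disjoint_Sets"
begin

text \<open>The simple reflection s_i is encoded by its index i, so J is a subset of
  {1..<n} (i.e. of {1..n-1}). Positions k with k not in J are the cut points
  j_1 < ... < j_r.\<close>

definition same_region :: "nat set \<Rightarrow> nat \<Rightarrow> nat \<Rightarrow> bool" where
  "same_region J a b \<longleftrightarrow> (\<forall>k. min a b \<le> k \<and> k < max a b \<longrightarrow> k \<in> J)"

definition parabolic :: "nat \<Rightarrow> nat set \<Rightarrow> (nat \<Rightarrow> nat) set" where
  "parabolic n J = {w. w permutes {1..n} \<and> (\<forall>i\<in>J. w i < w (Suc i))}"

definition parabolic_231 :: "nat \<Rightarrow> nat set \<Rightarrow> (nat \<Rightarrow> nat) set" where
  "parabolic_231 n J = {w \<in> parabolic n J.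
     \<not> (\<exists>i j k. 1 \<le> i \<and> i < j \<and> j < k \<and> k \<le> n \<and>
            \<not> same_region J i j \<and> \<not> same_region J j k \<and> \<not> same_region J i k \<and>
            w k < w i \<and> w i < w j \<and> w i = w k + 1)}"

definition bump :: "nat set set \<Rightarrow> nat \<Rightarrow> nat \<Rightarrow> bool" where
  "bump P a b \<longleftrightarrow> a < b \<and> (\<exists>B\<in>P. a \<in> B \<and> b \<in> B \<and> \<not> (\<exists>c\<in>B. a < c \<and> c < b))"

definition noncrossing_J :: "nat \<Rightarrow> nat set \<Rightarrow> nat set set set" where
  "noncrossing_J n J = {P. partition_on {1..n} P \<and>
     \<comment> \<open>NC1\<close>
     (\<forall>B\<in>P. \<forall>a\<in>B. \<forall>b\<in>B. a \<noteq> b \<longrightarrow> \<not> same_region J a b) \<and>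
     \<comment> \<open>NC2\<close>
     (\<forall>i1 i2 j1 j2. bump P i1 i2 \<and> bump P j1 j2 \<and> (i1, i2) \<noteq> (j1, j2) \<and>
         i1 < j1 \<and> j1 < i2 \<and> i2 < j2 \<longrightarrow> same_region J i1 j1 \<or> same_region J i2 j1) \<and>
     \<comment> \<open>NC3\<close>
     (\<forall>i1 i2 j1 j2. bump P i1 i2 \<and> bump P j1 j2 \<and> (i1, i2) \<noteq> (j1, j2) \<and>
         i1 < j1 \<and> j1 < j2 \<and> j2 < i2 \<longrightarrow> \<not> same_region J i1 j1)}"

end

theory Submission
  imports Defs
begin

text \<open>Send \<open>w\<close> to the partition of the positions whose blocks are the maximal runs of
  consecutive values \<open>v + k, \<dots>, v + 1, v\<close> occurring in this order from left to right in \<open>w\<close>.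
  Its bumps are exactly the pairs of positions carrying values \<open>v + 1, v\<close> (in this order), so
  the parabolic condition and 231-avoidance turn directly into NC1--NC3.

  Conversely, the position \<open>m\<close> of the largest value can be read off the partition: it is the
  rightmost position that is last in its \<open>J\<close>-region, first in its block, and not nested
  strictly inside a bump both of whose ends lie outside its region. Deleting \<open>m\<close> (from the
  permutation, and from its block) commutes with the map, and reinserting \<open>m\<close> with the largest
  value inverts the deletion. Hence injectivity and surjectivity follow by induction on the
  number of positions, once \<open>[n]\<close> is generalised to an arbitrary finite set of positions.\<close>

lemma same_region_refl [simp]: "same_region J a a"
  by (auto simp: same_region_def)

lemma same_region_commute: "same_region J a b \<longleftrightarrow> same_region J b a"
  by (simp add: same_region_def min.commute max.commute)

lemma same_region_iff: "a \<le> b \<Longrightarrow> same_region J a b \<longleftrightarrow> (\<forall>k. a \<le> k \<and> k < b \<longrightarrow> k \<in> J)"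
  by (simp add: same_region_def min_def max_def)

lemma same_region_split:
  "a \<le> b \<Longrightarrow> b \<le> c \<Longrightarrow> same_region J a c \<longleftrightarrow> same_region J a b \<and> same_region J b c"
  by (simp add: same_region_iff) (meson le_trans less_le_trans not_le)

section \<open>Permutations of a finite set of positions\<close>

definition region_increasing :: "nat set \<Rightarrow> nat set \<Rightarrow> (nat \<Rightarrow> nat) \<Rightarrow> bool" where
  "region_increasing J X w \<longleftrightarrow> (\<forall>a\<in>X. \<forall>b\<in>X. a < b \<longrightarrow> same_region J a b \<longrightarrow> w a < w b)"

definition avoids_231 :: "nat set \<Rightarrow> nat set \<Rightarrow> (nat \<Rightarrow> nat) \<Rightarrow> bool" where
  "avoids_231 J X w \<longleftrightarrow> (\<forall>i\<in>X. \<forall>j\<in>X. \<forall>k\<in>X. i < j \<longrightarrow> j < k \<longrightarrow>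
     \<not> same_region J i j \<longrightarrow> \<not> same_region J j k \<longrightarrow> \<not> same_region J i k \<longrightarrow>
     w i = Suc (w k) \<longrightarrow> w j \<le> w i)"

text \<open>The set \<open>parabolic_231 n J\<close> with the positions \<open>[n]\<close> replaced by an arbitrary
  finite set \<open>X\<close>; deleting the position of the largest value stays inside this family.\<close>

definition perms_231 :: "nat set \<Rightarrow> nat set \<Rightarrow> (nat \<Rightarrow> nat) set" where
  "perms_231 J X = {w. bij_betw w X {1..card X} \<and> (\<forall>x. x \<notin> X \<longrightarrow> w x = x) \<and>
     region_increasing J X w \<and> avoids_231 J X w}"

lemma perms_231D:
  assumes "w \<in> perms_231 J X"
  shows "bij_betw w X {1..card X}" "\<And>x. x \<notin> X \<Longrightarrow> w x = x"
    "region_increasing J X w" "avoids_231 J X w"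
  using assms by (auto simp: perms_231_def)

lemma region_increasingD:
  "region_increasing J X w \<Longrightarrow> a \<in> X \<Longrightarrow> b \<in> X \<Longrightarrow> a < b \<Longrightarrow> same_region J a b \<Longrightarrow> w a < w b"
  by (simp add: region_increasing_def)

lemma avoids_231D:
  "avoids_231 J X w \<Longrightarrow> i \<in> X \<Longrightarrow> j \<in> X \<Longrightarrow> k \<in> X \<Longrightarrow> i < j \<Longrightarrow> j < k \<Longrightarrow>
   \<not> same_region J i j \<Longrightarrow> \<not> same_region J j k \<Longrightarrow> \<not> same_region J i k \<Longrightarrow>
   w i = Suc (w k) \<Longrightarrow> w j \<le> w i"
  unfolding avoids_231_def by blast

lemma lift_Suc_mono_less_interval:
  fixes w :: "nat \<Rightarrow> nat"
  shows "(\<And>k. a \<le> k \<Longrightarrow> k < b \<Longrightarrow> w k < w (Suc k)) \<Longrightarrow> a < b \<Longrightarrow> w a < w b"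
proof (induction b)
  case (Suc b)
  show ?case
  proof (cases "a = b")
    case False
    with Suc have "w a < w b" "w b < w (Suc b)" by (simp_all add: less_Suc_eq)
    then show ?thesis by simp
  qed (use Suc.prems in simp)
qed simp

lemma region_increasing_iff:
  assumes "J \<subseteq> {1..<n}"
  shows "region_increasing J {1..n} w \<longleftrightarrow> (\<forall>i\<in>J. w i < w (Suc i))"
proof
  assume increasing: "region_increasing J {1..n} w"
  show "\<forall>i\<in>J. w i < w (Suc i)"
  proof
    fix i assume "i \<in> J"
    then have "i \<in> {1..n}" "Suc i \<in> {1..n}" "same_region J i (Suc i)"
      using assms by (auto simp: same_region_iff less_Suc_eq_le)
    then show "w i < w (Suc i)" using region_increasingD[OF increasing, of i "Suc i"] by simp
  qed
next
  assume step: "\<forall>i\<in>J. w i < w (Suc i)"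
  show "region_increasing J {1..n} w"
  proof (unfold region_increasing_def, intro ballI impI)
    fix a b assume "a < b" "same_region J a b"
    then have "\<And>k. a \<le> k \<Longrightarrow> k < b \<Longrightarrow> w k < w (Suc k)"
      using same_region_iff[of a b J] step by simp
    then show "w a < w b" using \<open>a < b\<close> by (rule lift_Suc_mono_less_interval)
  qed
qed

lemma no_231_pattern_iff_avoids_231:
  "\<not> (\<exists>i j k. 1 \<le> i \<and> i < j \<and> j < k \<and> k \<le> n \<and>
      \<not> same_region J i j \<and> \<not> same_region J j k \<and> \<not> same_region J i k \<and>
      w k < w i \<and> w i < w j \<and> w i = w k + 1) \<longleftrightarrow> avoids_231 J {1..n} w"
    (is "\<not> (\<exists>i j k. ?pattern i j k) \<longleftrightarrow> _")
proof
  assume no_pattern: "\<not> (\<exists>i j k. ?pattern i j k)"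
  show "avoids_231 J {1..n} w"
    unfolding avoids_231_def
  proof (intro ballI impI)
    fix i j k assume ijk: "i \<in> {1..n}" "j \<in> {1..n}" "k \<in> {1..n}" "i < j" "j < k"
      "\<not> same_region J i j" "\<not> same_region J j k" "\<not> same_region J i k" "w i = Suc (w k)"
    show "w j \<le> w i"
    proof (rule ccontr)
      assume "\<not> w j \<le> w i"
      then have "?pattern i j k" using ijk by auto
      then show False using no_pattern by blast
    qed
  qed
next
  assume avoids: "avoids_231 J {1..n} w"
  show "\<not> (\<exists>i j k. ?pattern i j k)"
  proof
    assume "\<exists>i j k. ?pattern i j k"
    then obtain i j k where "?pattern i j k" by blast
    moreover have "w j \<le> w i" using avoids_231D[OF avoids, of i j k] calculation by simp
    ultimately show False by simp
  qed
qed

lemma parabolic_231_eq_perms_231: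
  assumes "J \<subseteq> {1..<n}"
  shows "parabolic_231 n J = perms_231 J {1..n}"
proof (rule set_eqI)
  fix w
  have perm: "w permutes {1..n} \<longleftrightarrow>
      bij_betw w {1..n} {1..card {1..n}} \<and> (\<forall>x. x \<notin> {1..n} \<longrightarrow> w x = x)"
    using permutes_imp_bij permutes_not_in bij_imp_permutes by fastforce
  show "w \<in> parabolic_231 n J \<longleftrightarrow> w \<in> perms_231 J {1..n}"
    unfolding parabolic_231_def parabolic_def perms_231_def mem_Collect_eq perm
      region_increasing_iff[OF assms] no_231_pattern_iff_avoids_231[symmetric]
    by (simp only: conj_assoc)
qed

lemma bij_betw_interval_surj:
  "bij_betw w X {1..n} \<Longrightarrow> 1 \<le> v \<Longrightarrow> v \<le> n \<Longrightarrow> \<exists>x\<in>X. w x = v"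
  by (metis atLeastAtMost_iff bij_betw_imp_surj_on imageE)

lemma bij_betw_interval_range:
  "bij_betw w X {1..n} \<Longrightarrow> x \<in> X \<Longrightarrow> 1 \<le> w x \<and> w x \<le> n"
  using bij_betwE by fastforce

lemma bij_betw_interval_inj:
  "bij_betw w X {1..n} \<Longrightarrow> x \<in> X \<Longrightarrow> y \<in> X \<Longrightarrow> w x = w y \<Longrightarrow> x = y"
  by (metis bij_betw_imp_inj_on inj_onD)

section \<open>The partition of a permutation\<close>

text \<open>The blocks of \<open>inv_descent_rel X w\<close> are the maximal runs of consecutive values
  \<open>v + k, \<dots>, v + 1, v\<close> occurring in this order from left to right in \<open>w\<close>.\<close>

definition inv_descent :: "nat set \<Rightarrow> (nat \<Rightarrow> nat) \<Rightarrow> nat \<Rightarrow> bool" where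
  "inv_descent X w v \<longleftrightarrow> (\<exists>a\<in>X. \<exists>b\<in>X. a < b \<and> w a = Suc v \<and> w b = v)"

definition inv_descent_rel :: "nat set \<Rightarrow> (nat \<Rightarrow> nat) \<Rightarrow> (nat \<times> nat) set" where
  "inv_descent_rel X w = {(x, y). x \<in> X \<and> y \<in> X \<and>
     (\<forall>v. min (w x) (w y) \<le> v \<and> v < max (w x) (w y) \<longrightarrow> inv_descent X w v)}"

definition rel_bump :: "(nat \<times> nat) set \<Rightarrow> nat \<Rightarrow> nat \<Rightarrow> bool" where
  "rel_bump R a b \<longleftrightarrow> a < b \<and> (a, b) \<in> R \<and> (\<forall>c. a < c \<and> c < b \<longrightarrow> (a, c) \<notin> R)"

lemma inv_descent_relD:
  assumes "(x, y) \<in> inv_descent_rel X w"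
  shows "x \<in> X" "y \<in> X"
    "\<And>v. min (w x) (w y) \<le> v \<Longrightarrow> v < max (w x) (w y) \<Longrightarrow> inv_descent X w v"
  using assms by (auto simp: inv_descent_rel_def)

lemma inv_descent_rel_between:
  assumes xy: "(x, y) \<in> inv_descent_rel X w" and "z \<in> X"
    and "min (w x) (w y) \<le> w z" "w z \<le> max (w x) (w y)"
  shows "(x, z) \<in> inv_descent_rel X w"
proof -
  have "inv_descent X w v" if "min (w x) (w z) \<le> v" "v < max (w x) (w z)" for v
    using that assms(3,4) by (intro inv_descent_relD(3)[OF xy]) linarith+
  then show ?thesis using inv_descent_relD[OF xy] assms(2) by (simp add: inv_descent_rel_def)
qed

lemma inv_descent_rel_sym: "(x, y) \<in> inv_descent_rel X w \<Longrightarrow> (y, x) \<in> inv_descent_rel X w"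
  by (auto simp: inv_descent_rel_def min.commute max.commute)

lemma inv_descent_rel_trans:
  assumes xy: "(x, y) \<in> inv_descent_rel X w" and yz: "(y, z) \<in> inv_descent_rel X w"
  shows "(x, z) \<in> inv_descent_rel X w"
proof -
  have "inv_descent X w v" if "min (w x) (w z) \<le> v" "v < max (w x) (w z)" for v
  proof -
    have "(min (w x) (w y) \<le> v \<and> v < max (w x) (w y)) \<or> (min (w y) (w z) \<le> v \<and> v < max (w y) (w z))"
      using that by linarith
    then show ?thesis using inv_descent_relD(3)[OF xy] inv_descent_relD(3)[OF yz] by blast
  qed
  then show ?thesis using inv_descent_relD[OF xy] inv_descent_relD[OF yz] by (simp add: inv_descent_rel_def)
qed

lemma equiv_inv_descent_rel: "equiv X (inv_descent_rel X w)"
proof (rule equivI)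
  show "inv_descent_rel X w \<subseteq> X \<times> X" by (auto simp: inv_descent_rel_def)
  show "refl_on X (inv_descent_rel X w)" by (rule refl_onI) (auto simp: inv_descent_rel_def)
  show "sym (inv_descent_rel X w)" by (rule symI) (rule inv_descent_rel_sym)
  show "trans (inv_descent_rel X w)" by (rule transI) (rule inv_descent_rel_trans)
qed

lemma inv_descent_rel_antitone:
  assumes w: "bij_betw w X {1..n}"
  shows "(x, y) \<in> inv_descent_rel X w \<Longrightarrow> w x < w y \<Longrightarrow> y < x"
proof (induction "w y - w x" arbitrary: y rule: less_induct)
  case less
  have xy: "x \<in> X" "y \<in> X" using inv_descent_relD[OF less.prems(1)] by auto
  have "inv_descent X w (w y - 1)" using inv_descent_relD(3)[OF less.prems(1)] less.prems(2) by simp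
  then obtain a b where ab: "a \<in> X" "b \<in> X" "a < b" "w a = w y" "w b = w y - 1"
    using less.prems(2) by (auto simp: inv_descent_def)
  have "a = y" using bij_betw_interval_inj[OF w ab(1) xy(2) ab(4)] .
  show "y < x"
  proof (cases "w b = w x")
    case True
    then have "b = x" using bij_betw_interval_inj[OF w ab(2) xy(1)] by simp
    then show ?thesis using ab \<open>a = y\<close> by simp
  next
    case False
    then have "w x < w b" using ab less.prems(2) by simp
    moreover have "(x, b) \<in> inv_descent_rel X w"
      using inv_descent_rel_between[OF less.prems(1) ab(2)] ab less.prems(2) by simp
    ultimately have "b < x" using less.hyps[of b] ab less.prems(2) by simp
    then show ?thesis using ab \<open>a = y\<close> by simp
  qed
qed

lemma rel_bump_inv_descent_relD:
  assumes w: "bij_betw w X {1..n}" and bump: "rel_bump (inv_descent_rel X w) a b"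
  shows "a \<in> X \<and> b \<in> X \<and> a < b \<and> w a = Suc (w b)"
proof -
  have ab: "a < b" "(a, b) \<in> inv_descent_rel X w"
    and nearest: "\<And>c. a < c \<Longrightarrow> c < b \<Longrightarrow> (a, c) \<notin> inv_descent_rel X w"
    using bump by (auto simp: rel_bump_def)
  have X: "a \<in> X" "b \<in> X" using inv_descent_relD[OF ab(2)] by auto
  have "w a \<noteq> w b" using bij_betw_interval_inj[OF w X] ab by auto
  moreover have "\<not> w a < w b" using inv_descent_rel_antitone[OF w ab(2)] ab by auto
  ultimately have gt: "w b < w a" by simp
  have "w a = Suc (w b)"
  proof (rule ccontr)
    assume "w a \<noteq> Suc (w b)"
    then have between: "Suc (w b) < w a" using gt by simp
    then obtain z where z: "z \<in> X" "w z = Suc (w b)"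
      using bij_betw_interval_surj[OF w, of "Suc (w b)"] bij_betw_interval_range[OF w X(1)] by auto
    have az: "(a, z) \<in> inv_descent_rel X w"
      using inv_descent_rel_between[OF ab(2) z(1)] z gt between by simp
    have "a < z" using inv_descent_rel_antitone[OF w inv_descent_rel_sym[OF az]] z between by simp
    moreover have "z < b"
      using inv_descent_rel_antitone[OF w inv_descent_rel_trans[OF inv_descent_rel_sym[OF ab(2)] az]] z
      by simp
    ultimately show False using nearest az by blast
  qed
  then show ?thesis using X ab by simp
qed

lemma rel_bump_inv_descent_relI:
  assumes w: "bij_betw w X {1..n}" and ab: "a \<in> X" "b \<in> X" "a < b" "w a = Suc (w b)"
  shows "rel_bump (inv_descent_rel X w) a b"
proof -
  have "inv_descent X w (w b)" unfolding inv_descent_def using ab by blast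
  then have ab_rel: "(a, b) \<in> inv_descent_rel X w"
    using ab by (simp add: inv_descent_rel_def) (metis le_antisym less_Suc_eq_le)
  have "(a, c) \<notin> inv_descent_rel X w" if c: "a < c" "c < b" for c
  proof
    assume ac: "(a, c) \<in> inv_descent_rel X w"
    have cX: "c \<in> X" using inv_descent_relD[OF ac] by simp
    have "w c \<noteq> w a" "w c \<noteq> w b" using bij_betw_interval_inj[OF w, of c] ab cX c by auto
    then consider "w c < w b" | "w a < w c" using ab by linarith
    then show False
    proof cases
      case 1
      have "(c, b) \<in> inv_descent_rel X w"
        using inv_descent_rel_between[OF inv_descent_rel_sym[OF ac]] ab 1 by auto
      then show False using inv_descent_rel_antitone[OF w] 1 c by fastforce
    next
      case 2
      then show False using inv_descent_rel_antitone[OF w ac] c by simp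
    qed
  qed
  then show ?thesis using ab_rel ab by (auto simp: rel_bump_def)
qed

lemma rel_bump_inv_descent_rel_iff:
  "bij_betw w X {1..n} \<Longrightarrow>
    rel_bump (inv_descent_rel X w) a b \<longleftrightarrow> a \<in> X \<and> b \<in> X \<and> a < b \<and> w a = Suc (w b)"
  using rel_bump_inv_descent_relD rel_bump_inv_descent_relI by blast

text \<open>The relational form of \<open>noncrossing_J\<close> on a position set \<open>X\<close>; in NC2 and NC3 the
  two bumps are automatically distinct because \<open>i1 < j1\<close>.\<close>

definition noncrossing_rel :: "nat set \<Rightarrow> nat set \<Rightarrow> (nat \<times> nat) set set" where
  "noncrossing_rel J X = {R. equiv X R \<and>
     (\<forall>a b. (a, b) \<in> R \<longrightarrow> a \<noteq> b \<longrightarrow> \<not> same_region J a b) \<and>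
     (\<forall>i1 i2 j1 j2. rel_bump R i1 i2 \<and> rel_bump R j1 j2 \<and> i1 < j1 \<and> j1 < i2 \<and> i2 < j2 \<longrightarrow>
        same_region J i1 j1 \<or> same_region J i2 j1) \<and>
     (\<forall>i1 i2 j1 j2. rel_bump R i1 i2 \<and> rel_bump R j1 j2 \<and> i1 < j1 \<and> j1 < j2 \<and> j2 < i2 \<longrightarrow>
        \<not> same_region J i1 j1)}"

lemma noncrossing_relD:
  assumes "R \<in> noncrossing_rel J X"
  shows "equiv X R"
    and "\<And>a b. (a, b) \<in> R \<Longrightarrow> a \<noteq> b \<Longrightarrow> \<not> same_region J a b"
    and "\<And>i1 i2 j1 j2. rel_bump R i1 i2 \<Longrightarrow> rel_bump R j1 j2 \<Longrightarrow> i1 < j1 \<Longrightarrow> j1 < i2 \<Longrightarrow> i2 < j2 \<Longrightarrow>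
      same_region J i1 j1 \<or> same_region J i2 j1"
    and "\<And>i1 i2 j1 j2. rel_bump R i1 i2 \<Longrightarrow> rel_bump R j1 j2 \<Longrightarrow> i1 < j1 \<Longrightarrow> j1 < j2 \<Longrightarrow> j2 < i2 \<Longrightarrow>
      \<not> same_region J i1 j1"
  using assms unfolding noncrossing_rel_def by blast+

lemma inv_descent_rel_region_distinct:
  assumes w: "bij_betw w X {1..n}" and increasing: "region_increasing J X w"
    and ab: "(a, b) \<in> inv_descent_rel X w" "a \<noteq> b"
  shows "\<not> same_region J a b"
proof
  assume same: "same_region J a b"
  have X: "a \<in> X" "b \<in> X" using inv_descent_relD[OF ab(1)] by auto
  consider "a < b" | "b < a" using ab(2) by linarith
  then show False
  proof cases
    case 1
    then have "w a < w b" using region_increasingD[OF increasing X] same by blast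
    then show False using inv_descent_rel_antitone[OF w ab(1)] 1 by simp
  next
    case 2
    then have "w b < w a" using region_increasingD[OF increasing X(2,1)] same same_region_commute by metis
    then show False using inv_descent_rel_antitone[OF w inv_descent_rel_sym[OF ab(1)]] 2 by simp
  qed
qed

lemma inv_descent_rel_crossing_bumps:
  assumes w: "w \<in> perms_231 J X"
    and bumps: "rel_bump (inv_descent_rel X w) i1 i2" "rel_bump (inv_descent_rel X w) j1 j2"
    and order: "i1 < j1" "j1 < i2" "i2 < j2"
  shows "same_region J i1 j1 \<or> same_region J i2 j1"
proof (rule ccontr)
  note perm = perms_231D[OF w]
  have bi: "i1 \<in> X" "i2 \<in> X" "w i1 = Suc (w i2)" and bj: "j1 \<in> X" "j2 \<in> X" "w j1 = Suc (w j2)"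
    using bumps rel_bump_inv_descent_rel_iff[OF perm(1)] by auto
  assume "\<not> (same_region J i1 j1 \<or> same_region J i2 j1)"
  then have n1: "\<not> same_region J i1 j1" and n2: "\<not> same_region J j1 i2"
    using same_region_commute by metis+
  have n3: "\<not> same_region J i1 i2" using n1 same_region_split[of i1 j1 i2 J] order by auto
  have n4: "\<not> same_region J j1 j2" using n2 same_region_split[of j1 i2 j2 J] order by auto
  have "w j1 \<le> w i1" using avoids_231D[OF perm(4) bi(1) bj(1) bi(2) order(1,2) n1 n2 n3 bi(3)] .
  moreover have "w j1 \<noteq> w i1" "w j1 \<noteq> w i2"
    using bij_betw_interval_inj[OF perm(1) bj(1)] bi order by auto
  ultimately have lt: "w j1 < w i2" using bi(3) by simp
  show False
  proof (cases "same_region J i2 j2")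
    case True
    then have "w i2 < w j2" using region_increasingD[OF perm(3) bi(2) bj(2) order(3)] by blast
    then show False using lt bj(3) by simp
  next
    case False
    have "w i2 \<le> w j1" using avoids_231D[OF perm(4) bj(1) bi(2) bj(2) order(2,3) n2 False n4 bj(3)] .
    then show False using lt by simp
  qed
qed

lemma inv_descent_rel_nested_bumps:
  assumes w: "w \<in> perms_231 J X"
    and bumps: "rel_bump (inv_descent_rel X w) i1 i2" "rel_bump (inv_descent_rel X w) j1 j2"
    and order: "i1 < j1" "j1 < j2" "j2 < i2"
  shows "\<not> same_region J i1 j1"
proof
  note perm = perms_231D[OF w]
  have bi: "i1 \<in> X" "i2 \<in> X" "w i1 = Suc (w i2)" and bj: "j1 \<in> X" "j2 \<in> X" "w j1 = Suc (w j2)"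
    using bumps rel_bump_inv_descent_rel_iff[OF perm(1)] by auto
  assume same: "same_region J i1 j1"
  have lt: "w i1 < w j1" using region_increasingD[OF perm(3) bi(1) bj(1) order(1) same] .
  have n1: "\<not> same_region J j2 i2"
    using region_increasingD[OF perm(3) bj(2) bi(2) order(3)] lt bi(3) bj(3) by auto
  have n2: "\<not> same_region J i1 j2"
    using region_increasingD[OF perm(3) bj(1) bj(2) order(2)] same_region_split[of i1 j1 j2 J] order bj(3)
    by auto
  have n3: "\<not> same_region J i1 i2" using n1 same_region_split[of i1 j2 i2 J] order by auto
  have "w j2 \<le> w i1" using avoids_231D[OF perm(4) bi(1) bj(2) bi(2) _ order(3) n2 n1 n3 bi(3)] order by auto
  moreover have "w j2 \<noteq> w i1" using bij_betw_interval_inj[OF perm(1) bj(2) bi(1)] order by auto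
  ultimately show False using lt bi(3) bj(3) by simp
qed

lemma inv_descent_rel_noncrossing:
  assumes "w \<in> perms_231 J X"
  shows "inv_descent_rel X w \<in> noncrossing_rel J X"
  unfolding noncrossing_rel_def
  using equiv_inv_descent_rel
    inv_descent_rel_region_distinct[OF perms_231D(1,3)[OF assms]]
    inv_descent_rel_crossing_bumps[OF assms] inv_descent_rel_nested_bumps[OF assms]
  by blast

section \<open>Recovering the position of the largest value\<close>

definition region_last :: "nat set \<Rightarrow> nat set \<Rightarrow> nat \<Rightarrow> bool" where
  "region_last J X e \<longleftrightarrow> e \<in> X \<and> (\<forall>x\<in>X. e < x \<longrightarrow> \<not> same_region J e x)"

definition class_min :: "(nat \<times> nat) set \<Rightarrow> nat \<Rightarrow> bool" where
  "class_min R e \<longleftrightarrow> (\<forall>x. (x, e) \<in> R \<longrightarrow> e \<le> x)"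

definition uncovered :: "nat set \<Rightarrow> (nat \<times> nat) set \<Rightarrow> nat \<Rightarrow> bool" where
  "uncovered J R e \<longleftrightarrow>
     (\<forall>a b. rel_bump R a b \<and> a < e \<and> e < b \<longrightarrow> same_region J a e \<or> same_region J e b)"

definition top_candidates :: "nat set \<Rightarrow> nat set \<Rightarrow> (nat \<times> nat) set \<Rightarrow> nat set" where
  "top_candidates J X R = {e. region_last J X e \<and> class_min R e \<and> uncovered J R e}"

definition top_position :: "nat set \<Rightarrow> nat set \<Rightarrow> (nat \<times> nat) set \<Rightarrow> nat" where
  "top_position J X R = Max (top_candidates J X R)"

lemma top_candidatesD:
  assumes "e \<in> top_candidates J X R"
  shows "region_last J X e" "class_min R e" "uncovered J R e" "e \<in> X"
  using assms unfolding top_candidates_def region_last_def by auto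

lemma finite_top_candidates: "finite X \<Longrightarrow> finite (top_candidates J X R)"
  by (rule finite_subset[of _ X]) (auto dest: top_candidatesD(4))

lemma region_last_perm_top:
  assumes w: "w \<in> perms_231 J X" and m: "m \<in> X" "w m = card X"
  shows "region_last J X m"
  unfolding region_last_def
proof (intro conjI ballI impI notI)
  fix x assume "x \<in> X" "m < x" "same_region J m x"
  then have "w m < w x" using region_increasingD[OF perms_231D(3)[OF w] m(1)] by blast
  then show False using bij_betw_interval_range[OF perms_231D(1)[OF w] \<open>x \<in> X\<close>] m by simp
qed (rule m(1))

lemma class_min_perm_top:
  assumes w: "bij_betw w X {1..card X}" and m: "m \<in> X" "w m = card X"
  shows "class_min (inv_descent_rel X w) m"
  unfolding class_min_def
proof (intro allI impI)
  fix x assume xm: "(x, m) \<in> inv_descent_rel X w"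
  have xX: "x \<in> X" using inv_descent_relD[OF xm] by simp
  show "m \<le> x"
  proof (cases "x = m")
    case False
    then have "w x < w m"
      using bij_betw_interval_inj[OF w xX m(1)] bij_betw_interval_range[OF w xX] m by fastforce
    then show ?thesis using inv_descent_rel_antitone[OF w xm] by simp
  qed simp
qed

lemma uncovered_perm_top:
  assumes w: "w \<in> perms_231 J X" and m: "m \<in> X" "w m = card X"
  shows "uncovered J (inv_descent_rel X w) m"
  unfolding uncovered_def
proof (intro allI impI)
  note perm = perms_231D[OF w]
  fix a b assume h: "rel_bump (inv_descent_rel X w) a b \<and> a < m \<and> m < b"
  then have ab: "a \<in> X" "b \<in> X" "a < b" "w a = Suc (w b)"
    using rel_bump_inv_descent_relD[OF perm(1)] by auto
  show "same_region J a m \<or> same_region J m b"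
  proof (rule ccontr)
    assume n: "\<not> (same_region J a m \<or> same_region J m b)"
    have "\<not> same_region J a b" using region_increasingD[OF perm(3) ab(1-3)] ab(4) by auto
    then have "w m \<le> w a" using avoids_231D[OF perm(4) ab(1) m(1) ab(2)] h n ab(4) by blast
    then have "w a = w m" using bij_betw_interval_range[OF perm(1) ab(1)] m by simp
    then show False using bij_betw_interval_inj[OF perm(1) ab(1) m(1)] h by simp
  qed
qed

lemma perm_top_in_top_candidates:
  assumes w: "w \<in> perms_231 J X" and m: "m \<in> X" "w m = card X"
  shows "m \<in> top_candidates J X (inv_descent_rel X w)"
  using region_last_perm_top[OF assms] class_min_perm_top[OF perms_231D(1)[OF w] m]
    uncovered_perm_top[OF assms]
  unfolding top_candidates_def by blast

text \<open>Take the largest value \<open>Max U\<close> above \<open>w e\<close> that is placed right of \<open>e\<close>. The top value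
  \<open>card X\<close> is placed left of \<open>e\<close>, so \<open>Max U + 1\<close> exists, and it must lie left of \<open>e\<close>.\<close>

lemma bij_betw_interval_straddling_pair:
  fixes X :: "nat set"
  assumes w: "bij_betw w X {1..card X}" and m: "m \<in> X" "w m = card X" "m < e"
    and p: "p \<in> X" "e < p" "w e < w p"
  obtains q' q where "q' \<in> X" "q \<in> X" "q' < e" "e < q" "w e < w q" "w q' = Suc (w q)"
proof -
  define U where "U = {u. w e < u \<and> (\<exists>q\<in>X. w q = u \<and> e < q)}"
  have "U \<subseteq> w ` X" unfolding U_def by blast
  then have "finite U"
    using bij_betw_imp_surj_on[OF w] finite_subset[of U "{1..card X}"] by simp
  moreover have "w p \<in> U" using p unfolding U_def by blast
  ultimately have "Max U \<in> U" and U_le: "\<And>u. u \<in> U \<Longrightarrow> u \<le> Max U"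
    using Max_in Max_ge by blast+
  then obtain q where q: "q \<in> X" "w q = Max U" "e < q" "w e < Max U"
    unfolding U_def by blast
  have "q \<noteq> m" using q(3) m(3) by simp
  then have "w q \<noteq> card X" using bij_betw_interval_inj[OF w q(1) m(1)] m(2) by metis
  then have "Suc (w q) \<le> card X" using bij_betw_interval_range[OF w q(1)] by simp
  then obtain q' where q': "q' \<in> X" "w q' = Suc (w q)"
    using bij_betw_interval_surj[OF w, of "Suc (w q)"] by auto
  have "\<not> e < q'"
  proof
    assume "e < q'"
    then have "Suc (Max U) \<in> U" using q q' unfolding U_def by auto
    then show False using U_le[of "Suc (Max U)"] by simp
  qed
  moreover have "q' \<noteq> e" using q' q by auto
  ultimately have "q' < e" by simp
  then show ?thesis using q q' by (intro that[of q' q]) auto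
qed

lemma top_candidate_le_perm_top:
  assumes w: "w \<in> perms_231 J X" and m: "m \<in> X" "w m = card X"
    and e: "e \<in> top_candidates J X (inv_descent_rel X w)"
  shows "e \<le> m"
proof (rule ccontr)
  assume "\<not> e \<le> m"
  then have "m < e" by simp
  note perm = perms_231D[OF w]
  note eD = top_candidatesD[OF e]
  have "w e \<noteq> w m" using bij_betw_interval_inj[OF perm(1) eD(4) m(1)] \<open>m < e\<close> by auto
  then have "w e < card X" using bij_betw_interval_range[OF perm(1) eD(4)] m by simp
  then obtain p where p: "p \<in> X" "w p = Suc (w e)"
    using bij_betw_interval_surj[OF perm(1), of "Suc (w e)"] by auto
  have "e < p"
  proof (rule ccontr)
    assume "\<not> e < p"
    moreover have "p \<noteq> e" using p by auto
    ultimately have "rel_bump (inv_descent_rel X w) p e"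
      using rel_bump_inv_descent_relI[OF perm(1) p(1) eD(4)] p by simp
    then show False using eD(2) unfolding class_min_def rel_bump_def by fastforce
  qed
  moreover have "w e < w p" using p by simp
  ultimately obtain q' q where q: "q' \<in> X" "q \<in> X" "q' < e" "e < q" "w e < w q" "w q' = Suc (w q)"
    by (rule bij_betw_interval_straddling_pair[OF perm(1) m \<open>m < e\<close> p(1)])
  then have "rel_bump (inv_descent_rel X w) q' q" using rel_bump_inv_descent_relI[OF perm(1)] by simp
  then have "same_region J q' e \<or> same_region J e q" using eD(3) q unfolding uncovered_def by blast
  then show False
  proof
    assume "same_region J q' e"
    then have "w q' < w e" using region_increasingD[OF perm(3) q(1) eD(4) q(3)] by blast
    then show False using q by simp
  next
    assume "same_region J e q"
    then show False using eD(1) q unfolding region_last_def by blast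
  qed
qed

lemma top_position_inv_descent_rel:
  assumes w: "w \<in> perms_231 J X" and m: "m \<in> X" "w m = card X"
  shows "top_position J X (inv_descent_rel X w) = m"
proof -
  have "finite X"
    using bij_betw_interval_range[OF perms_231D(1)[OF w] m(1)] m(2) card.infinite by fastforce
  then show ?thesis
    unfolding top_position_def
    using perm_top_in_top_candidates[OF assms] top_candidate_le_perm_top[OF assms]
    by (intro Max_eqI finite_top_candidates)
qed

section \<open>Deleting and inserting the largest value\<close>

lemma bij_betw_delete_top:
  assumes w: "bij_betw w X {1..card X}" and m: "m \<in> X" "w m = card X"
  shows "bij_betw (w(m := m)) (X - {m}) {1..card (X - {m})}"
proof -
  have "finite X" using bij_betw_interval_range[OF w m(1)] m(2) card.infinite by fastforce
  then have "{1..card X} - {card X} = {1..card (X - {m})}" using m by auto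
  moreover have "bij_betw w (X - {m}) ({1..card X} - {card X})"
    using bij_betw_DiffI[OF w, of "{m}" "{card X}"] bij_betw_interval_range[OF w m(1)] m
    by (simp add: bij_betw_def)
  ultimately show ?thesis using bij_betw_cong[of "X - {m}" "w(m := m)" w] by simp
qed

lemma bij_betw_insert_top:
  assumes w: "bij_betw w (X - {m}) {1..card (X - {m})}" and m: "m \<in> X" and "finite X"
  shows "bij_betw (w(m := card X)) X {1..card X}"
proof -
  have "card X > 0" using m \<open>finite X\<close> card_gt_0_iff by blast
  then have card: "card (X - {m}) = card X - 1" "card X \<ge> 1"
    using m by (simp_all add: card_Diff_singleton)
  have "bij_betw (w(m := card X)) (X - {m}) {1..card (X - {m})}"
    using w bij_betw_cong[of "X - {m}" "w(m := card X)" w] by simp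
  moreover have "bij_betw (w(m := card X)) {m} {card X}" by (simp add: bij_betw_def)
  ultimately have "bij_betw (w(m := card X)) ((X - {m}) \<union> {m}) ({1..card (X - {m})} \<union> {card X})"
    by (rule bij_betw_combine) (use card in simp)
  moreover have "(X - {m}) \<union> {m} = X" "{1..card (X - {m})} \<union> {card X} = {1..card X}"
    using m card by auto
  ultimately show ?thesis by simp
qed

lemma perms_231_delete_top:
  assumes w: "w \<in> perms_231 J X" and m: "m \<in> X" "w m = card X"
  shows "w(m := m) \<in> perms_231 J (X - {m})"
  using perms_231D[OF w] bij_betw_delete_top[OF perms_231D(1)[OF w] m]
  unfolding perms_231_def region_increasing_def avoids_231_def by auto

lemma inv_descent_rel_delete_top:
  assumes w: "bij_betw w X {1..card X}" and m: "m \<in> X" "w m = card X"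
  shows "inv_descent_rel (X - {m}) (w(m := m)) = Restr (inv_descent_rel X w) (- {m})"
proof -
  have small: "w x < card X" if "x \<in> X" "x \<noteq> m" for x
    using bij_betw_interval_range[OF w that(1)] bij_betw_interval_inj[OF w that(1) m(1)] that m
    by fastforce
  have descent_iff: "inv_descent (X - {m}) (w(m := m)) v \<longleftrightarrow> inv_descent X w v"
    if "Suc v < card X" for v
  proof
    assume "inv_descent (X - {m}) (w(m := m)) v"
    then show "inv_descent X w v" unfolding inv_descent_def by (metis DiffD1 DiffD2 fun_upd_other insertI1)
  next
    assume "inv_descent X w v"
    then obtain a b where ab: "a \<in> X" "b \<in> X" "a < b" "w a = Suc v" "w b = v"
      unfolding inv_descent_def by blast
    moreover have "a \<noteq> m" "b \<noteq> m" using ab m that by auto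
    ultimately show "inv_descent (X - {m}) (w(m := m)) v"
      unfolding inv_descent_def by (intro bexI[of _ a] bexI[of _ b]) auto
  qed
  have pair_iff: "(x, y) \<in> inv_descent_rel (X - {m}) (w(m := m)) \<longleftrightarrow> (x, y) \<in> inv_descent_rel X w"
    if xy: "x \<in> X" "x \<noteq> m" "y \<in> X" "y \<noteq> m" for x y
  proof -
    have "Suc v < card X" if "v < max (w x) (w y)" for v
      using that small[OF xy(1,2)] small[OF xy(3,4)] by (simp add: max_def split: if_split_asm)
    then show ?thesis using xy descent_iff by (auto simp: inv_descent_rel_def)
  qed
  have "(x, y) \<in> inv_descent_rel (X - {m}) (w(m := m)) \<longleftrightarrow>
      (x, y) \<in> Restr (inv_descent_rel X w) (- {m})" for x y
  proof (cases "x \<in> X \<and> x \<noteq> m \<and> y \<in> X \<and> y \<noteq> m")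
    case True
    then show ?thesis using pair_iff[of x y] by simp
  next
    case False
    then show ?thesis by (auto simp: inv_descent_rel_def)
  qed
  then show ?thesis by (simp add: set_eq_iff split_paired_all)
qed

lemma inv_descent_rel_top_iff:
  assumes w: "bij_betw w X {1..card X}" and m: "m \<in> X" "w m = card X"
    and t: "t \<in> X" "w t = card X - 1" and y: "y \<in> X" "y \<noteq> m"
  shows "(m, y) \<in> inv_descent_rel X w \<longleftrightarrow> m < t \<and> (t, y) \<in> inv_descent_rel X w"
proof
  have "w y \<noteq> card X" using bij_betw_interval_inj[OF w y(1) m(1)] m y by auto
  then have wy: "1 \<le> w y" "w y \<le> card X - 1" using bij_betw_interval_range[OF w y(1)] by auto
  assume my: "(m, y) \<in> inv_descent_rel X w"
  have mt: "(m, t) \<in> inv_descent_rel X w" using inv_descent_rel_between[OF my t(1)] wy m t by simp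
  have "m < t" using inv_descent_rel_antitone[OF w inv_descent_rel_sym[OF mt]] wy m t by simp
  moreover have "(t, y) \<in> inv_descent_rel X w"
    using inv_descent_rel_trans[OF inv_descent_rel_sym[OF mt] my] .
  ultimately show "m < t \<and> (t, y) \<in> inv_descent_rel X w" by simp
next
  assume "m < t \<and> (t, y) \<in> inv_descent_rel X w"
  moreover have "w m = Suc (w t)" using bij_betw_interval_range[OF w t(1)] m t by simp
  ultimately have "rel_bump (inv_descent_rel X w) m t"
    using rel_bump_inv_descent_rel_iff[OF w] m t by simp
  then show "(m, y) \<in> inv_descent_rel X w"
    using inv_descent_rel_trans \<open>m < t \<and> (t, y) \<in> inv_descent_rel X w\<close> unfolding rel_bump_def by blast
qed

lemma region_increasing_insert_top:
  assumes w: "w \<in> perms_231 J (X - {m})" and m: "m \<in> X" and "finite X"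
    and last: "region_last J X m"
  shows "region_increasing J X (w(m := card X))"
  unfolding region_increasing_def
proof (intro ballI impI)
  note perm = perms_231D[OF w]
  fix a b assume ab: "a \<in> X" "b \<in> X" "a < b" "same_region J a b"
  consider "a = m" | "a \<noteq> m" "b = m" | "a \<noteq> m" "b \<noteq> m" by blast
  then show "(w(m := card X)) a < (w(m := card X)) b"
  proof cases
    case 1
    then show ?thesis using last ab unfolding region_last_def by blast
  next
    case 2
    have "w a \<le> card (X - {m})" using bij_betw_interval_range[OF perm(1)] ab(1) 2 by simp
    also have "\<dots> < card X" using card_Diff1_less[OF \<open>finite X\<close> m] .
    finally show ?thesis using 2 by simp
  next
    case 3
    then show ?thesis using region_increasingD[OF perm(3), of a b] ab by simp
  qed
qed

lemma avoids_231_insert_top: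
  assumes w: "w \<in> perms_231 J (X - {m})" and m: "m \<in> X" and "finite X"
    and uncov: "uncovered J (inv_descent_rel (X - {m}) w) m"
  shows "avoids_231 J X (w(m := card X))"
  unfolding avoids_231_def
proof (intro ballI impI)
  note perm = perms_231D[OF w]
  define W where "W = w(m := card X)"
  have W: "bij_betw W X {1..card X}" using bij_betw_insert_top[OF perm(1) m \<open>finite X\<close>] W_def by simp
  fix i j k assume ijk: "i \<in> X" "j \<in> X" "k \<in> X" "i < j" "j < k" "\<not> same_region J i j"
    "\<not> same_region J j k" "\<not> same_region J i k" "W i = Suc (W k)"
  have "W i \<le> card X" "W j \<le> card X" using bij_betw_interval_range[OF W] ijk(1,2) by auto
  then have "k \<noteq> m" using ijk(9) W_def by auto
  consider "i = m" | "i \<noteq> m" "j = m" | "i \<noteq> m" "j \<noteq> m" by blast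
  then show "W j \<le> W i"
  proof cases
    case 1
    then show ?thesis using \<open>W j \<le> card X\<close> W_def by simp
  next
    case 2
    have "rel_bump (inv_descent_rel (X - {m}) w) i k"
      using rel_bump_inv_descent_relI[OF perm(1)] ijk 2 \<open>k \<noteq> m\<close> W_def by simp
    then show ?thesis using uncov ijk 2 unfolding uncovered_def by blast
  next
    case 3
    then show ?thesis using avoids_231D[OF perm(4), of i j k] ijk \<open>k \<noteq> m\<close> W_def by simp
  qed
qed

lemma perms_231_insert_top:
  assumes w: "w \<in> perms_231 J (X - {m})" and m: "m \<in> X" and "finite X"
    and last: "region_last J X m" and uncov: "uncovered J (inv_descent_rel (X - {m}) w) m"
  shows "w(m := card X) \<in> perms_231 J X"
  using bij_betw_insert_top[OF perms_231D(1)[OF w] m \<open>finite X\<close>] perms_231D(2)[OF w] m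
    region_increasing_insert_top[OF w m \<open>finite X\<close> last] avoids_231_insert_top[OF w m \<open>finite X\<close> uncov]
  unfolding perms_231_def by auto

section \<open>Top positions of noncrossing relations\<close>

lemma equivD_mem: "equiv X R \<Longrightarrow> (a, b) \<in> R \<Longrightarrow> a \<in> X \<and> b \<in> X"
  unfolding equiv_def by blast

lemma equivD_refl: "equiv X R \<Longrightarrow> a \<in> X \<Longrightarrow> (a, a) \<in> R"
  unfolding equiv_def refl_on_def by blast

lemma equivD_sym: "equiv X R \<Longrightarrow> (a, b) \<in> R \<Longrightarrow> (b, a) \<in> R"
  unfolding equiv_def sym_def by blast

lemma equivD_trans: "equiv X R \<Longrightarrow> (a, b) \<in> R \<Longrightarrow> (b, c) \<in> R \<Longrightarrow> (a, c) \<in> R"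
  unfolding equiv_def trans_def by blast

lemma rel_bumpD:
  assumes "equiv X R" and "rel_bump R a b"
  shows "a \<in> X \<and> b \<in> X \<and> a < b \<and> (a, b) \<in> R"
proof -
  have "a < b" "(a, b) \<in> R" using assms(2) by (auto simp: rel_bump_def)
  then show ?thesis using equivD_mem[OF assms(1)] by blast
qed

lemma rel_bump_unique_left:
  assumes R: "equiv X R" and bumps: "rel_bump R a b" "rel_bump R a' b"
  shows "a = a'"
proof (rule ccontr)
  have "(a, b) \<in> R" "(a', b) \<in> R" using bumps by (auto simp: rel_bump_def)
  then have aa': "(a, a') \<in> R" "(a', a) \<in> R"
    using equivD_trans[OF R] equivD_sym[OF R] by blast+
  assume "a \<noteq> a'"
  then consider "a < a'" | "a' < a" by linarith
  then show False
  proof cases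
    case 1
    then show False using aa'(1) bumps unfolding rel_bump_def by blast
  next
    case 2
    then show False using aa'(2) bumps unfolding rel_bump_def by blast
  qed
qed

lemma rel_bump_unique_right:
  assumes "rel_bump R a b" "rel_bump R a b'"
  shows "b = b'"
proof (rule ccontr)
  assume "b \<noteq> b'"
  then consider "b < b'" | "b' < b" by linarith
  then show False
    by cases (use assms in \<open>auto simp: rel_bump_def\<close>)
qed

lemma rel_bump_exists_right:
  assumes R: "equiv X R" and "finite X" and "(a, y) \<in> R" "a < y"
  shows "\<exists>c. rel_bump R a c"
proof -
  define Z where "Z = {z. (a, z) \<in> R \<and> a < z}"
  have "finite Z" unfolding Z_def
    using \<open>finite X\<close> equivD_mem[OF R] by (auto intro: finite_subset[of _ X])
  moreover have "y \<in> Z" using assms(3,4) Z_def by simp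
  ultimately have Z: "Min Z \<in> Z" and Z_le: "\<And>z. z \<in> Z \<Longrightarrow> Min Z \<le> z" using Min_in Min_le by blast+
  have "(a, c) \<notin> R" if "a < c" "c < Min Z" for c
    using Z_le[of c] that unfolding Z_def by auto
  then have "rel_bump R a (Min Z)" using Z unfolding rel_bump_def Z_def by blast
  then show ?thesis by blast
qed

lemma rel_bump_exists_left:
  assumes R: "equiv X R" and "finite X" and "(x, b) \<in> R" "x < b"
  shows "\<exists>a. rel_bump R a b"
proof -
  define Z where "Z = {z. (z, b) \<in> R \<and> z < b}"
  have "finite Z" unfolding Z_def
    using \<open>finite X\<close> equivD_mem[OF R] by (auto intro: finite_subset[of _ X])
  moreover have "x \<in> Z" using assms(3,4) Z_def by simp
  ultimately have Z: "Max Z \<in> Z" and Z_le: "\<And>z. z \<in> Z \<Longrightarrow> z \<le> Max Z" using Max_in Max_ge by blast+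
  have "(Max Z, c) \<notin> R" if "Max Z < c" "c < b" for c
  proof
    assume "(Max Z, c) \<in> R"
    then have "c \<in> Z" using Z that equivD_trans[OF R equivD_sym[OF R]] unfolding Z_def by blast
    then show False using Z_le that by fastforce
  qed
  then have "rel_bump R (Max Z) b" using Z unfolding rel_bump_def Z_def by blast
  then show ?thesis by blast
qed

definition region_end :: "nat set \<Rightarrow> nat set \<Rightarrow> nat \<Rightarrow> nat" where
  "region_end J X a = Max {x \<in> X. same_region J a x}"

lemma region_end_spec:
  assumes "finite X" and "a \<in> X"
  shows "a \<le> region_end J X a" "region_end J X a \<in> X" "same_region J a (region_end J X a)"
    "region_last J X (region_end J X a)"
proof -
  let ?S = "{x \<in> X. same_region J a x}"
  have "finite ?S" "a \<in> ?S" using assms by auto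
  then have S: "Max ?S \<in> ?S" and S_le: "\<And>x. x \<in> ?S \<Longrightarrow> x \<le> Max ?S" using Max_in Max_ge by blast+
  show a_le: "a \<le> region_end J X a" using S_le \<open>a \<in> ?S\<close> unfolding region_end_def .
  show "region_end J X a \<in> X" "same_region J a (region_end J X a)" using S unfolding region_end_def by auto
  show "region_last J X (region_end J X a)" unfolding region_last_def
  proof (intro conjI ballI impI notI)
    show "region_end J X a \<in> X" using S unfolding region_end_def by auto
  next
    fix x assume x: "x \<in> X" "region_end J X a < x" "same_region J (region_end J X a) x"
    then have "same_region J a x"
      using a_le same_region_split[of a "region_end J X a" x J] S unfolding region_end_def by auto
    then have "x \<le> region_end J X a" using S_le x unfolding region_end_def by auto
    then show False using x by simp
  qed
qed

lemma region_end_of_bump_less: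
  assumes R: "R \<in> noncrossing_rel J X" and "finite X" and ae: "rel_bump R a e"
  shows "region_end J X a < e"
proof (rule ccontr)
  note nc = noncrossing_relD[OF R]
  have a: "a \<in> X" "a < e" "(a, e) \<in> R" using rel_bumpD[OF nc(1) ae] by auto
  assume "\<not> region_end J X a < e"
  then have "same_region J a e"
    using same_region_split[of a e "region_end J X a" J] region_end_spec[OF \<open>finite X\<close> a(1)] a by simp
  then show False using nc(2)[OF a(3)] a by simp
qed

lemma uncovered_region_end_of_bump:
  assumes R: "R \<in> noncrossing_rel J X" and "finite X"
    and e: "region_last J X e" "uncovered J R e" and ae: "rel_bump R a e"
  shows "uncovered J R (region_end J X a)"
  unfolding uncovered_def
proof (intro allI impI)
  note nc = noncrossing_relD[OF R]
  have a: "a \<in> X" "a < e" "(a, e) \<in> R" using rel_bumpD[OF nc(1) ae] by auto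
  define e1 where "e1 = region_end J X a"
  have e1: "a \<le> e1" "same_region J a e1" using region_end_spec[OF \<open>finite X\<close> a(1)] e1_def by auto
  fix c d assume cd: "rel_bump R c d \<and> c < region_end J X a \<and> region_end J X a < d"
  then have cd: "rel_bump R c d" "c < e1" "e1 < d" "d \<in> X" using rel_bumpD[OF nc(1)] e1_def by auto
  show "same_region J c (region_end J X a) \<or> same_region J (region_end J X a) d"
    unfolding e1_def[symmetric]
  proof (rule ccontr)
    assume n: "\<not> (same_region J c e1 \<or> same_region J e1 d)"
    have "c < a"
    proof (rule ccontr)
      assume "\<not> c < a"
      then have "same_region J c e1" using same_region_split[of a c e1 J] e1 cd by simp
      then show False using n by simp
    qed
    have not_ca: "\<not> same_region J c a" using same_region_split[of c a e1 J] \<open>c < a\<close> e1 n by auto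
    have not_ad: "\<not> same_region J a d" using same_region_split[of a e1 d J] e1 cd n by auto
    consider "e < d" | "d = e" | "d < e" by linarith
    then show False
    proof cases
      case 1
      then have "same_region J c e \<or> same_region J e d"
        using e(2) cd \<open>c < a\<close> a unfolding uncovered_def by auto
      then show False
        using same_region_split[of c a e J] \<open>c < a\<close> a not_ca e(1) cd(4) 1
        unfolding region_last_def by auto
    next
      case 2
      then show False using rel_bump_unique_left[OF nc(1)] cd ae \<open>c < a\<close> by blast
    next
      case 3
      have "a < d" using e1 cd by simp
      then have "same_region J c a \<or> same_region J d a" using nc(3)[of c d a e] cd ae \<open>c < a\<close> 3 by blast
      then show False using not_ca not_ad same_region_commute by metis
    qed
  qed
qed

lemma region_end_below_non_class_min:
  assumes R: "R \<in> noncrossing_rel J X" and "finite X"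
    and e: "region_last J X e" "uncovered J R e" "\<not> class_min R e"
  obtains a where "rel_bump R a e" "a \<le> region_end J X a" "region_end J X a < e"
    "region_last J X (region_end J X a)" "uncovered J R (region_end J X a)"
proof -
  note nc = noncrossing_relD[OF R]
  obtain x where "(x, e) \<in> R" "x < e" using e(3) unfolding class_min_def by (auto simp: not_le)
  then obtain a where ae: "rel_bump R a e" using rel_bump_exists_left[OF nc(1) \<open>finite X\<close>] by blast
  have "a \<in> X" using rel_bumpD[OF nc(1) ae] by blast
  show ?thesis
    using that[OF ae] region_end_spec[OF \<open>finite X\<close> \<open>a \<in> X\<close>] region_end_of_bump_less[OF R \<open>finite X\<close> ae]
      uncovered_region_end_of_bump[OF R \<open>finite X\<close> e(1,2) ae] by blast
qed

lemma top_candidate_below: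
  assumes R: "R \<in> noncrossing_rel J X" and "finite X"
  shows "region_last J X e \<Longrightarrow> uncovered J R e \<Longrightarrow> \<exists>e'. e' \<in> top_candidates J X R \<and> e' \<le> e"
proof (induction e rule: less_induct)
  case (less e)
  show ?case
  proof (cases "class_min R e")
    case True
    then show ?thesis using less.prems unfolding top_candidates_def by blast
  next
    case False
    then obtain a where "region_end J X a < e" "region_last J X (region_end J X a)"
      "uncovered J R (region_end J X a)"
      using region_end_below_non_class_min[OF R \<open>finite X\<close> less.prems] by blast
    then obtain e' where "e' \<in> top_candidates J X R" "e' \<le> region_end J X a"
      using less.IH by blast
    then show ?thesis using \<open>region_end J X a < e\<close> by auto
  qed
qed

lemma top_position_in_top_candidates:
  assumes R: "R \<in> noncrossing_rel J X" and "finite X" and "X \<noteq> {}"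
  shows "top_position J X R \<in> top_candidates J X R"
proof -
  note nc = noncrossing_relD[OF R]
  have "Max X \<in> X" and X_le: "\<And>x. x \<in> X \<Longrightarrow> x \<le> Max X" using assms(2,3) by auto
  then have "region_last J X (Max X)" unfolding region_last_def by (meson leD)
  moreover have "uncovered J R (Max X)" unfolding uncovered_def
    using rel_bumpD[OF nc(1)] X_le by (metis not_le)
  ultimately have "top_candidates J X R \<noteq> {}" using top_candidate_below[OF R \<open>finite X\<close>] by blast
  then show ?thesis
    unfolding top_position_def using Max_in finite_top_candidates[OF \<open>finite X\<close>] by blast
qed

lemma top_candidate_le_top_position:
  "finite X \<Longrightarrow> e \<in> top_candidates J X R \<Longrightarrow> e \<le> top_position J X R"
  unfolding top_position_def using finite_top_candidates by (rule Max_ge)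

lemma class_min_rel_iff:
  assumes R: "equiv X R" and "finite X" and "class_min R m" and "y \<noteq> m"
  shows "(m, y) \<in> R \<longleftrightarrow> (\<exists>c. rel_bump R m c \<and> (c, y) \<in> Restr R (- {m}))"
proof
  assume my: "(m, y) \<in> R"
  then have "m < y" using assms(3,4) equivD_sym[OF R] unfolding class_min_def by fastforce
  then obtain c where c: "rel_bump R m c" using rel_bump_exists_right[OF R \<open>finite X\<close> my] by blast
  then have "(m, c) \<in> R" "m < c" unfolding rel_bump_def by auto
  then have "(c, y) \<in> Restr R (- {m})"
    using equivD_trans[OF R equivD_sym[OF R \<open>(m, c) \<in> R\<close>] my] \<open>y \<noteq> m\<close> by simp
  then show "\<exists>c. rel_bump R m c \<and> (c, y) \<in> Restr R (- {m})" using c by blast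
next
  assume "\<exists>c. rel_bump R m c \<and> (c, y) \<in> Restr R (- {m})"
  then obtain c where "(m, c) \<in> R" "(c, y) \<in> R" unfolding rel_bump_def by blast
  then show "(m, y) \<in> R" using equivD_trans[OF R] by blast
qed

lemma rel_bump_Restr_iff:
  assumes "class_min R m"
  shows "rel_bump (Restr R (- {m})) a b \<longleftrightarrow> rel_bump R a b \<and> a \<noteq> m"
proof
  assume bump: "rel_bump (Restr R (- {m})) a b"
  then have ab: "a < b" "(a, b) \<in> R" "a \<noteq> m" "b \<noteq> m" by (auto simp: rel_bump_def)
  have "(a, c) \<notin> R" if "a < c" "c < b" for c
  proof
    assume ac: "(a, c) \<in> R"
    show False
    proof (cases "c = m")
      case True
      then show False using assms ac that unfolding class_min_def by fastforce
    next
      case False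
      then show False using bump ac ab that by (auto simp: rel_bump_def)
    qed
  qed
  then show "rel_bump R a b \<and> a \<noteq> m" using ab by (auto simp: rel_bump_def)
next
  assume bump: "rel_bump R a b \<and> a \<noteq> m"
  then have "b \<noteq> m" using assms unfolding class_min_def rel_bump_def by fastforce
  then show "rel_bump (Restr R (- {m})) a b" using bump by (auto simp: rel_bump_def)
qed

lemma class_min_delete_bump_end:
  assumes R: "equiv X R" and m: "class_min R m" and c: "rel_bump R m c"
  shows "class_min (Restr R (- {m})) c"
  unfolding class_min_def
proof (intro allI impI)
  have mc: "m < c" "(m, c) \<in> R" using c by (auto simp: rel_bump_def)
  fix z assume "(z, c) \<in> Restr R (- {m})"
  then have z: "(z, c) \<in> R" "z \<noteq> m" by auto
  show "c \<le> z"
  proof (rule ccontr)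
    assume "\<not> c \<le> z"
    moreover have "(m, z) \<in> R" using equivD_trans[OF R mc(2) equivD_sym[OF R z(1)]] .
    moreover from this have "m < z"
      using m equivD_sym[OF R] z(2) unfolding class_min_def by fastforce
    ultimately show False using c unfolding rel_bump_def by auto
  qed
qed

lemma noncrossing_rel_delete:
  assumes R: "R \<in> noncrossing_rel J X" and "class_min R m"
  shows "Restr R (- {m}) \<in> noncrossing_rel J (X - {m})"
proof -
  note nc = noncrossing_relD[OF R]
  have "equiv (X - {m}) (Restr R (- {m}))"
  proof (rule equivI)
    show "Restr R (- {m}) \<subseteq> (X - {m}) \<times> (X - {m})" using equivD_mem[OF nc(1)] by auto
    show "refl_on (X - {m}) (Restr R (- {m}))" unfolding refl_on_def using equivD_refl[OF nc(1)] by auto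
    show "sym (Restr R (- {m}))" unfolding sym_def using equivD_sym[OF nc(1)] by auto
    show "trans (Restr R (- {m}))" unfolding trans_def using equivD_trans[OF nc(1)] by blast
  qed
  note bump_iff = rel_bump_Restr_iff[OF assms(2)]
  show ?thesis unfolding noncrossing_rel_def
  proof (intro CollectI conjI allI impI)
    show "equiv (X - {m}) (Restr R (- {m}))" by fact
  next
    fix a b assume "(a, b) \<in> Restr R (- {m})" "a \<noteq> b"
    then show "\<not> same_region J a b" using nc(2) by auto
  next
    fix i1 i2 j1 j2
    assume "rel_bump (Restr R (- {m})) i1 i2 \<and> rel_bump (Restr R (- {m})) j1 j2 \<and>
      i1 < j1 \<and> j1 < i2 \<and> i2 < j2"
    then show "same_region J i1 j1 \<or> same_region J i2 j1" using nc(3) bump_iff by blast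
  next
    fix i1 i2 j1 j2
    assume "rel_bump (Restr R (- {m})) i1 i2 \<and> rel_bump (Restr R (- {m})) j1 j2 \<and>
      i1 < j1 \<and> j1 < j2 \<and> j2 < i2"
    then show "\<not> same_region J i1 j1" using nc(4) bump_iff by blast
  qed
qed

context
  fixes J X R m
  assumes R: "R \<in> noncrossing_rel J X" and "finite X" and "X \<noteq> {}"
    and top: "m = top_position J X R"
begin

lemma top_position_is_max_candidate:
  shows "m \<in> top_candidates J X R" "\<And>e. e \<in> top_candidates J X R \<Longrightarrow> e \<le> m"
  using top_position_in_top_candidates[OF R \<open>finite X\<close> \<open>X \<noteq> {}\<close>]
    top_candidate_le_top_position[OF \<open>finite X\<close>] top by auto

lemma top_candidate_of_delete_top:
  assumes e: "e \<in> top_candidates J (X - {m}) (Restr R (- {m}))" and "m < e"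
    and bump_before: "\<And>c. rel_bump R m c \<Longrightarrow> c < e"
  shows "e \<in> top_candidates J X R"
proof -
  note nc = noncrossing_relD[OF R]
  note eD = top_candidatesD[OF e]
  note bump_iff = rel_bump_Restr_iff[OF top_candidatesD(2)[OF top_position_is_max_candidate(1)]]
  have "region_last J X e" unfolding region_last_def
  proof (intro conjI ballI impI notI)
    show "e \<in> X" using eD(4) by simp
  next
    fix x assume "x \<in> X" "e < x" "same_region J e x"
    moreover have "x \<in> X - {m}" using \<open>x \<in> X\<close> \<open>e < x\<close> \<open>m < e\<close> by auto
    ultimately show False using eD(1) unfolding region_last_def by blast
  qed
  moreover have "class_min R e" unfolding class_min_def
  proof (intro allI impI)
    fix z assume ze: "(z, e) \<in> R"
    show "e \<le> z"
    proof (cases "z = m")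
      case True
      then obtain c where c: "rel_bump R m c"
        using rel_bump_exists_right[OF nc(1) \<open>finite X\<close>] ze \<open>m < e\<close> by blast
      then have mc: "(m, c) \<in> R" "m < c" unfolding rel_bump_def by auto
      then have "(c, e) \<in> Restr R (- {m})"
        using equivD_trans[OF nc(1) equivD_sym[OF nc(1) mc(1)]] ze True eD(4) by simp
      then have "e \<le> c" using eD(2) unfolding class_min_def by blast
      then show ?thesis using bump_before[OF c] by simp
    next
      case False
      then show ?thesis using ze eD(2) eD(4) unfolding class_min_def by auto
    qed
  qed
  moreover have "uncovered J R e" unfolding uncovered_def
  proof (intro allI impI)
    fix a b assume ab: "rel_bump R a b \<and> a < e \<and> e < b"
    then have "a \<noteq> m" using bump_before by (metis not_less_iff_gr_or_eq)
    then have "rel_bump (Restr R (- {m})) a b" using bump_iff ab by simp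
    then show "same_region J a e \<or> same_region J e b"
      using eD(3) ab unfolding uncovered_def by blast
  qed
  ultimately show ?thesis unfolding top_candidates_def by blast
qed
lemma top_bump_end_eq:
  assumes c: "rel_bump R m c" and ay: "rel_bump R a y" and "a \<le> m" "m < y"
    and y: "region_last J X y" "uncovered J R y"
  shows "y = c"
proof (cases "a = m")
  case True
  then show ?thesis using rel_bump_unique_right c ay by blast
next
  case False
  note nc = noncrossing_relD[OF R]
  note mD = top_candidatesD[OF top_position_is_max_candidate(1)]
  have "a < m" using False \<open>a \<le> m\<close> by simp
  have cX: "c \<in> X" "m < c" using rel_bumpD[OF nc(1) c] by auto
  have "y \<in> X" using y(1) unfolding region_last_def by blast
  have not_my: "\<not> same_region J m y" using mD(1) \<open>y \<in> X\<close> \<open>m < y\<close> unfolding region_last_def by blast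
  then have "same_region J a m" using mD(3) ay \<open>a < m\<close> \<open>m < y\<close> unfolding uncovered_def by blast
  then have "\<not> c < y" using nc(4)[OF ay c \<open>a < m\<close> cX(2)] by blast
  moreover have "\<not> y < c"
  proof
    assume "y < c"
    then have "same_region J m y \<or> same_region J y c" using y(2) c \<open>m < y\<close> unfolding uncovered_def by blast
    moreover have "\<not> same_region J y c" using y(1) cX \<open>y < c\<close> unfolding region_last_def by blast
    ultimately show False using not_my by blast
  qed
  ultimately show ?thesis by simp
qed

lemma top_bump_end_le_region_last:
  assumes c: "rel_bump R m c"
  shows "region_last J X y \<Longrightarrow> uncovered J R y \<Longrightarrow> m < y \<Longrightarrow> c \<le> y \<and> region_last J X c"
proof (induction y rule: less_induct)
  case (less y)
  have "y \<notin> top_candidates J X R" using top_position_is_max_candidate(2) less.prems(3) by (meson leD)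
  then have "\<not> class_min R y" using less.prems unfolding top_candidates_def by blast
  then obtain a where ay: "rel_bump R a y" and "a \<le> region_end J X a"
    and e1: "uncovered J R (region_end J X a)" "region_end J X a < y"
    and "region_last J X (region_end J X a)"
    using region_end_below_non_class_min[OF R \<open>finite X\<close> less.prems(1,2)] by blast
  show ?case
  proof (cases "m < region_end J X a")
    case True
    then show ?thesis
      using less.IH[OF e1(2) \<open>region_last J X (region_end J X a)\<close> e1(1)] e1(2) by simp
  next
    case False
    then have "y = c" using top_bump_end_eq[OF c ay _ less.prems(3,1,2)] \<open>a \<le> region_end J X a\<close> by simp
    then show ?thesis using less.prems by simp
  qed
qed

lemma uncovered_region_end_top_bump_end:
  assumes c: "rel_bump R m c"
  shows "uncovered J R (region_end J X c)"
  unfolding uncovered_def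
proof (intro allI impI)
  note nc = noncrossing_relD[OF R]
  note mD = top_candidatesD[OF top_position_is_max_candidate(1)]
  have cX: "c \<in> X" "m < c" using rel_bumpD[OF nc(1) c] by auto
  define x where "x = region_end J X c"
  have x: "c \<le> x" "same_region J c x" using region_end_spec[OF \<open>finite X\<close> cX(1)] x_def by auto
  fix a b assume ab: "rel_bump R a b \<and> a < region_end J X c \<and> region_end J X c < b"
  then have ab: "rel_bump R a b" "a < x" "x < b" using x_def by auto
  have abX: "a \<in> X" "b \<in> X" using rel_bumpD[OF nc(1) ab(1)] by auto
  show "same_region J a (region_end J X c) \<or> same_region J (region_end J X c) b"
    unfolding x_def[symmetric]
  proof (rule ccontr)
    assume n: "\<not> (same_region J a x \<or> same_region J x b)"
    have "a < c"
    proof (rule ccontr)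
      assume "\<not> a < c"
      then have "same_region J a x" using same_region_split[of c a x J] x ab by simp
      then show False using n by simp
    qed
    have not_ac: "\<not> same_region J a c" using same_region_split[of a c x J] \<open>a < c\<close> x n by auto
    consider "m < a" | "a = m" | "a < m" by linarith
    then show False
    proof cases
      case 1
      then have "same_region J m a \<or> same_region J c a" using nc(3)[OF c ab(1)] ab \<open>a < c\<close> x by auto
      moreover have "\<not> same_region J m a" using mD(1) abX 1 unfolding region_last_def by blast
      ultimately show False using not_ac same_region_commute by metis
    next
      case 2
      then have "b = c" using rel_bump_unique_right ab(1) c by blast
      then show False using ab x by simp
    next
      case 3
      have "m < b" using cX x ab by simp
      then have "same_region J a m \<or> same_region J m b" using mD(3) ab 3 unfolding uncovered_def by blast
      moreover have "\<not> same_region J m b" using mD(1) abX \<open>m < b\<close> unfolding region_last_def by blast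
      moreover have "\<not> same_region J a m" using nc(4)[OF ab(1) c 3] cX x ab by auto
      ultimately show False by blast
    qed
  qed
qed

lemma region_last_top_bump_end:
  assumes c: "rel_bump R m c"
  shows "region_last J X c"
proof -
  have cX: "c \<in> X" "m < c" using rel_bumpD[OF noncrossing_relD(1)[OF R] c] by auto
  have "c \<le> region_end J X c" "region_last J X (region_end J X c)"
    using region_end_spec[OF \<open>finite X\<close> cX(1)] by auto
  then show ?thesis
    using top_bump_end_le_region_last[OF c _ uncovered_region_end_top_bump_end[OF c]] cX by simp
qed

lemma uncovered_delete_top_bump_end:
  assumes c: "rel_bump R m c"
  shows "uncovered J (Restr R (- {m})) c"
  unfolding uncovered_def
proof (intro allI impI)
  note nc = noncrossing_relD[OF R]
  note mD = top_candidatesD[OF top_position_is_max_candidate(1)]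
  have cX: "c \<in> X" "m < c" using rel_bumpD[OF nc(1) c] by auto
  fix a b assume ab: "rel_bump (Restr R (- {m})) a b \<and> a < c \<and> c < b"
  then have bump: "rel_bump R a b" "a \<noteq> m" using rel_bump_Restr_iff[OF mD(2)] by auto
  have abX: "a \<in> X" "b \<in> X" using rel_bumpD[OF nc(1) bump(1)] by auto
  show "same_region J a c \<or> same_region J c b"
  proof (rule ccontr)
    assume n: "\<not> (same_region J a c \<or> same_region J c b)"
    consider "m < a" | "a < m" using bump by linarith
    then show False
    proof cases
      case 1
      then have "same_region J m a \<or> same_region J c a" using nc(3)[OF c bump(1)] ab by auto
      moreover have "\<not> same_region J m a" using mD(1) abX 1 unfolding region_last_def by blast
      ultimately show False using n same_region_commute by metis
    next
      case 2
      have "m < b" using cX ab by simp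
      then have "same_region J a m \<or> same_region J m b"
        using mD(3) bump 2 unfolding uncovered_def by blast
      moreover have "\<not> same_region J m b" using mD(1) abX \<open>m < b\<close> unfolding region_last_def by blast
      moreover have "\<not> same_region J a m" using nc(4)[OF bump(1) c 2 cX(2)] ab by auto
      ultimately show False by blast
    qed
  qed
qed

lemma top_bump_end_top_candidate:
  assumes c: "rel_bump R m c"
  shows "c \<in> top_candidates J (X - {m}) (Restr R (- {m}))"
proof -
  have "m < c" using c by (simp add: rel_bump_def)
  then have "region_last J (X - {m}) c"
    using region_last_top_bump_end[OF c] unfolding region_last_def by auto
  then show ?thesis
    using class_min_delete_bump_end[OF noncrossing_relD(1)[OF R]
        top_candidatesD(2)[OF top_position_is_max_candidate(1)] c]
      uncovered_delete_top_bump_end[OF c]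
    unfolding top_candidates_def by blast
qed

lemma top_position_delete_bump:
  assumes c: "rel_bump R m c"
  shows "top_position J (X - {m}) (Restr R (- {m})) = c"
  unfolding top_position_def
proof (rule Max_eqI)
  show "finite (top_candidates J (X - {m}) (Restr R (- {m})))"
    using finite_top_candidates \<open>finite X\<close> by blast
  show "c \<in> top_candidates J (X - {m}) (Restr R (- {m}))" using top_bump_end_top_candidate[OF c] .
next
  fix e assume e: "e \<in> top_candidates J (X - {m}) (Restr R (- {m}))"
  show "e \<le> c"
  proof (rule ccontr)
    assume "\<not> e \<le> c"
    then have "c < e" "m < e" using c by (auto simp: rel_bump_def)
    moreover have "c' < e" if "rel_bump R m c'" for c'
      using rel_bump_unique_right[OF c that] \<open>c < e\<close> by simp
    ultimately have "e \<in> top_candidates J X R" using top_candidate_of_delete_top[OF e] by blast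
    then show False using top_position_is_max_candidate(2) \<open>m < e\<close> by (simp add: leD)
  qed
qed

lemma top_position_delete_no_bump:
  assumes "\<nexists>c. rel_bump R m c" and "X - {m} \<noteq> {}"
  shows "top_position J (X - {m}) (Restr R (- {m})) < m"
proof -
  have "finite (X - {m})" using \<open>finite X\<close> by simp
  note e = top_position_in_top_candidates[OF
      noncrossing_rel_delete[OF R top_candidatesD(2)[OF top_position_is_max_candidate(1)]] this assms(2)]
  have "top_position J (X - {m}) (Restr R (- {m})) \<noteq> m" using top_candidatesD(4)[OF e] by blast
  moreover have "\<not> m < top_position J (X - {m}) (Restr R (- {m}))"
  proof
    assume "m < top_position J (X - {m}) (Restr R (- {m}))"
    then have "top_position J (X - {m}) (Restr R (- {m})) \<in> top_candidates J X R"
      using top_candidate_of_delete_top[OF e] assms(1) by blast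
    with \<open>m < top_position J (X - {m}) (Restr R (- {m}))\<close> show False
      using top_position_is_max_candidate(2) by (simp add: leD)
  qed
  ultimately show ?thesis by simp
qed

context
  fixes w
  assumes w: "w \<in> perms_231 J (X - {m})" and w_rel: "inv_descent_rel (X - {m}) w = Restr R (- {m})"
begin

lemma perms_231_insert_top_position: "w(m := card X) \<in> perms_231 J X"
proof -
  note mD = top_candidatesD[OF top_position_is_max_candidate(1)]
  have "uncovered J (inv_descent_rel (X - {m}) w) m"
    using mD(3) rel_bump_Restr_iff[OF mD(2)] unfolding w_rel uncovered_def by blast
  then show ?thesis using perms_231_insert_top[OF w mD(4) \<open>finite X\<close> mD(1)] by blast
qed

lemma inv_descent_rel_insert_top_away:
  assumes "x \<noteq> m" "y \<noteq> m"
  shows "(x, y) \<in> inv_descent_rel X (w(m := card X)) \<longleftrightarrow> (x, y) \<in> R"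
proof -
  note mD = top_candidatesD[OF top_position_is_max_candidate(1)]
  have "w m = m" using perms_231D(2)[OF w] by simp
  then have "(w(m := card X))(m := m) = w" by (simp add: fun_eq_iff)
  then have "Restr (inv_descent_rel X (w(m := card X))) (- {m}) = Restr R (- {m})"
    using inv_descent_rel_delete_top[OF perms_231D(1)[OF perms_231_insert_top_position] mD(4)] w_rel
    by simp
  then show ?thesis using assms by (auto simp: set_eq_iff)
qed

lemma inv_descent_rel_insert_top_at:
  assumes y: "y \<in> X" "y \<noteq> m"
  shows "(m, y) \<in> inv_descent_rel X (w(m := card X)) \<longleftrightarrow> (m, y) \<in> R"
proof -
  note nc = noncrossing_relD[OF R]
  note mD = top_candidatesD[OF top_position_is_max_candidate(1)]
  define W where "W = w(m := card X)"
  have W: "bij_betw W X {1..card X}" using perms_231D(1)[OF perms_231_insert_top_position] W_def by simp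
  have "X - {m} \<noteq> {}" using y by blast
  then have "card (X - {m}) \<ge> 1" using \<open>finite X\<close> by (simp add: Suc_le_eq card_gt_0_iff)
  then obtain t where t: "t \<in> X - {m}" "w t = card (X - {m})"
    using bij_betw_interval_surj[OF perms_231D(1)[OF w]] by fastforce
  have t_top: "t = top_position J (X - {m}) (Restr R (- {m}))"
    using top_position_inv_descent_rel[OF w t] w_rel by simp
  have Wt: "W t = card X - 1" "t \<in> X" "t \<noteq> m"
    using t W_def mD(4) \<open>finite X\<close> by (auto simp: card_Diff_singleton)
  have "(m, y) \<in> inv_descent_rel X W \<longleftrightarrow> m < t \<and> (t, y) \<in> inv_descent_rel X W"
    by (rule inv_descent_rel_top_iff[OF W mD(4) _ Wt(2,1) y]) (simp add: W_def)
  also have "\<dots> \<longleftrightarrow> m < t \<and> (t, y) \<in> Restr R (- {m})"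
    using inv_descent_rel_insert_top_away[of t y] Wt(3) y(2) unfolding W_def by simp
  also have "\<dots> \<longleftrightarrow> (\<exists>c. rel_bump R m c \<and> (c, y) \<in> Restr R (- {m}))"
  proof (cases "\<exists>c. rel_bump R m c")
    case True
    then obtain c where c: "rel_bump R m c" by blast
    then have "t = c" "m < c"
      using t_top top_position_delete_bump[OF c] by (auto simp: rel_bump_def)
    then show ?thesis using rel_bump_unique_right[OF c] c by blast
  next
    case False
    then have "t < m"
      using t_top top_position_delete_no_bump[OF False \<open>X - {m} \<noteq> {}\<close>]
      by simp
    then show ?thesis using False by auto
  qed
  also have "\<dots> \<longleftrightarrow> (m, y) \<in> R"
    using class_min_rel_iff[OF nc(1) \<open>finite X\<close> mD(2) y(2)] by simp
  finally show ?thesis using W_def by simp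
qed

lemma inv_descent_rel_insert_top: "inv_descent_rel X (w(m := card X)) = R"
proof -
  note nc = noncrossing_relD[OF R]
  note mD = top_candidatesD[OF top_position_is_max_candidate(1)]
  have "(x, y) \<in> inv_descent_rel X (w(m := card X)) \<longleftrightarrow> (x, y) \<in> R" for x y
  proof (cases "x \<in> X \<and> y \<in> X")
    case False
    then show ?thesis using inv_descent_relD(1,2) equivD_mem[OF nc(1)] by blast
  next
    case True
    then consider "x = m" "y = m" | "x = m" "y \<noteq> m" | "x \<noteq> m" "y = m" | "x \<noteq> m" "y \<noteq> m"
      by blast
    then show ?thesis
    proof cases
      case 1
      then show ?thesis
        using equivD_refl[OF equiv_inv_descent_rel] equivD_refl[OF nc(1)] mD(4) by blast
    next
      case 2
      then show ?thesis using inv_descent_rel_insert_top_at True by blast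
    next
      case 3
      then show ?thesis
        using inv_descent_rel_insert_top_at[of x] True inv_descent_rel_sym equivD_sym[OF nc(1)] by blast
    next
      case 4
      then show ?thesis using inv_descent_rel_insert_top_away by blast
    qed
  qed
  then show ?thesis by (simp add: set_eq_iff split_paired_all)
qed

end

end

lemma perms_231_empty: "perms_231 J {} = {id}"
proof -
  have "w \<in> perms_231 J {} \<longleftrightarrow> w = id" for w
    by (auto simp: perms_231_def region_increasing_def avoids_231_def bij_betw_def fun_eq_iff)
  then show ?thesis by blast
qed

lemma noncrossing_rel_empty: "noncrossing_rel J {} = {{}}"
proof -
  have "R \<in> noncrossing_rel J {} \<longleftrightarrow> R = {}" for R
  proof
    assume "R \<in> noncrossing_rel J {}"
    then show "R = {}" using equivD_mem[OF noncrossing_relD(1)] by fast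
  next
    assume "R = {}"
    then show "R \<in> noncrossing_rel J {}"
      unfolding noncrossing_rel_def rel_bump_def by (simp add: equiv_def refl_on_def sym_def trans_def)
  qed
  then show ?thesis by blast
qed

lemma top_value_position:
  assumes "w \<in> perms_231 J X" and "X \<noteq> {}"
  obtains m where "m \<in> X" "w m = card X"
proof -
  have "{1..card X} \<noteq> {}" using bij_betw_imp_surj_on[OF perms_231D(1)[OF assms(1)]] assms(2) by auto
  then have "1 \<le> card X" by simp
  then show ?thesis using bij_betw_interval_surj[OF perms_231D(1)[OF assms(1)]] that by blast
qed

lemma inj_on_inv_descent_rel_step:
  assumes "X \<noteq> {}"
    and IH: "\<And>m. m \<in> X \<Longrightarrow> inj_on (inv_descent_rel (X - {m})) (perms_231 J (X - {m}))"
  shows "inj_on (inv_descent_rel X) (perms_231 J X)"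
proof (rule inj_onI)
  fix w1 w2
  assume w1: "w1 \<in> perms_231 J X" and w2: "w2 \<in> perms_231 J X"
    and eq: "inv_descent_rel X w1 = inv_descent_rel X w2"
  obtain m where m1: "m \<in> X" "w1 m = card X" using top_value_position[OF w1 \<open>X \<noteq> {}\<close>] .
  obtain m2 where m2: "m2 \<in> X" "w2 m2 = card X" using top_value_position[OF w2 \<open>X \<noteq> {}\<close>] .
  have "m2 = m"
    using top_position_inv_descent_rel[OF w1 m1] top_position_inv_descent_rel[OF w2 m2] eq by simp
  with m2 have m2: "m \<in> X" "w2 m = card X" by simp_all
  have "inv_descent_rel (X - {m}) (w1(m := m)) = inv_descent_rel (X - {m}) (w2(m := m))"
    using inv_descent_rel_delete_top[OF perms_231D(1)[OF w1] m1]
      inv_descent_rel_delete_top[OF perms_231D(1)[OF w2] m2] eq by simp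
  then have "w1(m := m) = w2(m := m)"
    using inj_onD[OF IH[OF m1(1)]] perms_231_delete_top[OF w1 m1] perms_231_delete_top[OF w2 m2] by blast
  moreover have "w1 = (w1(m := m))(m := card X)" "w2 = (w2(m := m))(m := card X)"
    using m1 m2 by (simp_all add: fun_eq_iff)
  ultimately show "w1 = w2" by simp
qed

lemma noncrossing_rel_subset_image_step:
  assumes "finite X" and "X \<noteq> {}"
    and IH: "\<And>m. m \<in> X \<Longrightarrow>
      noncrossing_rel J (X - {m}) \<subseteq> inv_descent_rel (X - {m}) ` perms_231 J (X - {m})"
  shows "noncrossing_rel J X \<subseteq> inv_descent_rel X ` perms_231 J X"
proof
  fix R assume R: "R \<in> noncrossing_rel J X"
  define m where "m = top_position J X R"
  note mD = top_candidatesD[OF top_position_in_top_candidates[OF R assms(1,2)], folded m_def]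
  have "Restr R (- {m}) \<in> noncrossing_rel J (X - {m})" using noncrossing_rel_delete[OF R mD(2)] .
  then obtain w where w: "w \<in> perms_231 J (X - {m})" "inv_descent_rel (X - {m}) w = Restr R (- {m})"
    using IH[OF mD(4)] by blast
  show "R \<in> inv_descent_rel X ` perms_231 J X"
    using image_eqI[where f = "inv_descent_rel X"]
      inv_descent_rel_insert_top[OF R assms(1,2) m_def w]
      perms_231_insert_top_position[OF R assms(1,2) m_def w] by metis
qed

lemma bij_betw_inv_descent_rel:
  "finite X \<Longrightarrow> bij_betw (inv_descent_rel X) (perms_231 J X) (noncrossing_rel J X)"
proof (induction "card X" arbitrary: X rule: less_induct)
  case less
  show ?case
  proof (cases "X = {}")
    case True
    have "inv_descent_rel {} id = {}" by (simp add: inv_descent_rel_def)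
    then show ?thesis using True by (simp add: perms_231_empty noncrossing_rel_empty)
  next
    case False
    have IH: "bij_betw (inv_descent_rel (X - {m})) (perms_231 J (X - {m})) (noncrossing_rel J (X - {m}))"
      if "m \<in> X" for m
      using less.hyps[OF card_Diff1_less[OF less.prems that]] less.prems by simp
    have "inj_on (inv_descent_rel X) (perms_231 J X)"
      by (rule inj_on_inv_descent_rel_step[OF False bij_betw_imp_inj_on[OF IH]])
    moreover have "inv_descent_rel X ` perms_231 J X \<subseteq> noncrossing_rel J X"
      using inv_descent_rel_noncrossing by blast
    moreover have "noncrossing_rel J X \<subseteq> inv_descent_rel X ` perms_231 J X"
      by (rule noncrossing_rel_subset_image_step[OF less.prems False])
        (simp add: bij_betw_imp_surj_on[OF IH])
    ultimately show ?thesis by (simp add: bij_betw_def)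
  qed
qed

section \<open>Equivalence relations versus partitions\<close>

definition block_rel :: "'a set set \<Rightarrow> ('a \<times> 'a) set" where
  "block_rel P = {(x, y). \<exists>p\<in>P. x \<in> p \<and> y \<in> p}"

lemma block_rel_quotient:
  assumes R: "equiv X R"
  shows "block_rel (X // R) = R"
proof -
  have "(x, y) \<in> block_rel (X // R) \<longleftrightarrow> (x, y) \<in> R" for x y
  proof
    assume "(x, y) \<in> block_rel (X // R)"
    then obtain z where "z \<in> X" "x \<in> R `` {z}" "y \<in> R `` {z}"
      unfolding block_rel_def by (auto elim: quotientE)
    then show "(x, y) \<in> R" using equivD_trans[OF R equivD_sym[OF R]] by blast
  next
    assume xy: "(x, y) \<in> R"
    then have "x \<in> X" using equivD_mem[OF R] by blast
    then have "R `` {x} \<in> X // R" "x \<in> R `` {x}" using equivD_refl[OF R] quotientI by auto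
    then show "(x, y) \<in> block_rel (X // R)" using xy unfolding block_rel_def by blast
  qed
  then show ?thesis by (simp add: set_eq_iff split_paired_all)
qed

lemma bump_iff_rel_bump:
  assumes P: "partition_on X P"
  shows "bump P a b \<longleftrightarrow> rel_bump (block_rel P) a b"
proof -
  have same_block: "B = B'" if "B \<in> P" "B' \<in> P" "x \<in> B" "x \<in> B'" for B B' x
    using partition_onD2[OF P] that unfolding disjoint_def by blast
  show ?thesis
  proof
    assume "bump P a b"
    then obtain B where B: "a < b" "B \<in> P" "a \<in> B" "b \<in> B" "\<not> (\<exists>c\<in>B. a < c \<and> c < b)"
      unfolding bump_def by blast
    then have "(a, c) \<notin> block_rel P" if "a < c" "c < b" for c
      using that same_block unfolding block_rel_def by blast
    then show "rel_bump (block_rel P) a b" unfolding rel_bump_def block_rel_def using B by blast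
  next
    assume bump: "rel_bump (block_rel P) a b"
    then obtain B where B: "a < b" "B \<in> P" "a \<in> B" "b \<in> B" unfolding rel_bump_def block_rel_def by blast
    moreover have "\<not> (\<exists>c\<in>B. a < c \<and> c < b)"
      using bump B unfolding rel_bump_def block_rel_def by blast
    ultimately show "bump P a b" unfolding bump_def by blast
  qed
qed

lemma noncrossing_J_iff:
  assumes P: "partition_on {1..n} P"
  shows "P \<in> noncrossing_J n J \<longleftrightarrow> block_rel P \<in> noncrossing_rel J {1..n}"
proof -
  have "equiv {1..n} (block_rel P)" using equiv_partition_on[OF P] unfolding block_rel_def .
  moreover have "(\<forall>B\<in>P. \<forall>a\<in>B. \<forall>b\<in>B. a \<noteq> b \<longrightarrow> \<not> same_region J a b) \<longleftrightarrow>
      (\<forall>a b. (a, b) \<in> block_rel P \<longrightarrow> a \<noteq> b \<longrightarrow> \<not> same_region J a b)"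
    unfolding block_rel_def by blast
  moreover have "(\<forall>i1 i2 j1 j2. bump P i1 i2 \<and> bump P j1 j2 \<and> (i1, i2) \<noteq> (j1, j2) \<and>
         i1 < j1 \<and> j1 < i2 \<and> i2 < j2 \<longrightarrow> same_region J i1 j1 \<or> same_region J i2 j1) \<longleftrightarrow>
      (\<forall>i1 i2 j1 j2. rel_bump (block_rel P) i1 i2 \<and> rel_bump (block_rel P) j1 j2 \<and>
         i1 < j1 \<and> j1 < i2 \<and> i2 < j2 \<longrightarrow> same_region J i1 j1 \<or> same_region J i2 j1)"
    by (auto simp: bump_iff_rel_bump[OF P])
  moreover have "(\<forall>i1 i2 j1 j2. bump P i1 i2 \<and> bump P j1 j2 \<and> (i1, i2) \<noteq> (j1, j2) \<and>
         i1 < j1 \<and> j1 < j2 \<and> j2 < i2 \<longrightarrow> \<not> same_region J i1 j1) \<longleftrightarrow>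
      (\<forall>i1 i2 j1 j2. rel_bump (block_rel P) i1 i2 \<and> rel_bump (block_rel P) j1 j2 \<and>
         i1 < j1 \<and> j1 < j2 \<and> j2 < i2 \<longrightarrow> \<not> same_region J i1 j1)"
    by (auto simp: bump_iff_rel_bump[OF P])
  ultimately show ?thesis unfolding noncrossing_J_def noncrossing_rel_def using P by simp
qed

lemma bij_betw_quotient_noncrossing:
  "bij_betw (\<lambda>R. {1..n} // R) (noncrossing_rel J {1..n}) (noncrossing_J n J)"
proof (rule bij_betw_byWitness[where f' = block_rel])
  show "\<forall>R\<in>noncrossing_rel J {1..n}. block_rel ({1..n} // R) = R"
    using block_rel_quotient noncrossing_relD(1) by blast
  show "\<forall>P\<in>noncrossing_J n J. {1..n} // block_rel P = P"
    using partition_on_eq_quotient unfolding noncrossing_J_def block_rel_def by blast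
  show "(\<lambda>R. {1..n} // R) ` noncrossing_rel J {1..n} \<subseteq> noncrossing_J n J"
    using noncrossing_J_iff partition_on_quotient block_rel_quotient noncrossing_relD(1) by fastforce
  show "block_rel ` noncrossing_J n J \<subseteq> noncrossing_rel J {1..n}"
    using noncrossing_J_iff unfolding noncrossing_J_def by blast
qed

theorem theorem4p2:
  fixes n :: nat and J :: "nat set"
  assumes "n > 0" and "J \<subseteq> {1..<n}"
  shows "\<exists>f. bij_betw f (parabolic_231 n J) (noncrossing_J n J)"
proof -
  have "bij_betw (inv_descent_rel {1..n}) (parabolic_231 n J) (noncrossing_rel J {1..n})"
    using bij_betw_inv_descent_rel[of "{1..n}" J] parabolic_231_eq_perms_231[OF assms(2)] by simp
  then have "bij_betw ((\<lambda>R. {1..n} // R) \<circ> inv_descent_rel {1..n}) (parabolic_231 n J) (noncrossing_J n J)"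
    using bij_betw_quotient_noncrossing by (rule bij_betw_trans)
  then show ?thesis by blast
qed

end
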